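(* Let $P$ be a finite poset. If $J(P)$ is CDE then its dual $J(P)^*$ is CDE; if $J(P)$ is mCDE then $J(P)^*$ is mCDE; if $J(P)$ is tCDE then $J(P)^*=J(P^* )$ is tCDE.
   Context: $J(P)$ is the poset of order ideals of $P$ ordered by inclusion; $R^*$ denotes the dual poset (order reversed), and $J(P)^*\cong J(P^* )$. $\mathbb{E}(\mu;f)=\sum f\cdot\mathbb{P}(\mu;\cdot)$. $\mathrm{ddeg}(x)$ is the number of elements covered by $x$; $\mathrm{uni}$ is uniform; $\mathrm{maxchain}$ gives $x$ probability proportional to the number of maximal chains through $x$; $\mathrm{chain}(k)$ gives $x$ probability $\#\{k\text{-chains }c_0<\cdots<c_k\text{ containing }x\}/((k+1)\#\{k\text{-chains}\})$. A poset is CDE if $\mathbb{E}(\mathrm{maxchain};\mathrm{ddeg})=\mathbb{E}(\mathrm{uni};\mathrm{ddeg})$ and mCDE if $\mathbb{E}(\mathrm{chain}(k);\mathrm{ddeg})=\mathbb{E}(\mathrm{uni};\mathrm{ddeg})$ for all $k$ from $0$ to the length of a longest chain. Toggle statistics on $J(P)$: $\mathcal{T}^+_p(I)=1$ iff $p\notin I$ and $p$ is minimal in $P\setminus I$; $\mathcal{T}^-_p(I)=1$ iff $p\in I$ and $p$ is maximal in $I$ (else $0$). $\mu$ on $J(P)$ is toggle-symmetric if $\mathbb{E}(\mu;\mathcal{T}^+_p)=\mathbb{E}(\mu;\mathcal{T}^-_p)$ for all $p\in P$. $J(P)$ is tCDE if $\mathbb{E}(\mu;\mathrm{ddeg})=\mathbb{E}(\mathrm{uni}_{J(P)};\mathrm{ddeg})$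 for every toggle-symmetric distribution $\mu$ on $J(P)$. *)

theory Defs
  imports Complex_Main
begin

definition finite_poset :: "'a set \<Rightarrow> ('a \<Rightarrow> 'a \<Rightarrow> bool) \<Rightarrow> bool" where
  "finite_poset X le \<longleftrightarrow> finite X
     \<and> (\<forall>x\<in>X. le x x)
     \<and> (\<forall>x\<in>X. \<forall>y\<in>X. le x y \<and> le y x \<longrightarrow> x = y)
     \<and> (\<forall>x\<in>X. \<forall>y\<in>X. \<forall>z\<in>X. le x y \<and> le y z \<longrightarrow> le x z)"

definition strict :: "('a \<Rightarrow> 'a \<Rightarrow> bool) \<Rightarrow> 'a \<Rightarrow> 'a \<Rightarrow> bool" where
  "strict le x y \<longleftrightarrow> le x y \<and> x \<noteq> y"

definition dual_rel :: "('a \<Rightarrow> 'a \<Rightarrow> bool) \<Rightarrow> 'a \<Rightarrow> 'a \<Rightarrow> bool" where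
  "dual_rel le x y = le y x"

definition covers :: "'a set \<Rightarrow> ('a \<Rightarrow> 'a \<Rightarrow> bool) \<Rightarrow> 'a \<Rightarrow> 'a \<Rightarrow> bool" where
  "covers X le y x \<longleftrightarrow> x \<in> X \<and> y \<in> X \<and> strict le x y
     \<and> \<not> (\<exists>z\<in>X. strict le x z \<and> strict le z y)"

definition ddeg :: "'a set \<Rightarrow> ('a \<Rightarrow> 'a \<Rightarrow> bool) \<Rightarrow> 'a \<Rightarrow> nat" where
  "ddeg X le x = card {y \<in> X. covers X le x y}"

definition is_chain :: "'a set \<Rightarrow> ('a \<Rightarrow> 'a \<Rightarrow> bool) \<Rightarrow> 'a set \<Rightarrow> bool" where
  "is_chain X le C \<longleftrightarrow> C \<subseteq> X \<and> (\<forall>x\<in>C. \<forall>y\<in>C. le x y \<or> le y x)"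

definition is_maxchain :: "'a set \<Rightarrow> ('a \<Rightarrow> 'a \<Rightarrow> bool) \<Rightarrow> 'a set \<Rightarrow> bool" where
  "is_maxchain X le C \<longleftrightarrow> is_chain X le C \<and> (\<forall>D. is_chain X le D \<and> C \<subseteq> D \<longrightarrow> D = C)"

text \<open>k-chains c_0 < ... < c_k, i.e. chains with exactly k+1 elements\<close>
definition kchains :: "'a set \<Rightarrow> ('a \<Rightarrow> 'a \<Rightarrow> bool) \<Rightarrow> nat \<Rightarrow> 'a set set" where
  "kchains X le k = {C. is_chain X le C \<and> card C = k + 1}"

definition chain_length :: "'a set \<Rightarrow> ('a \<Rightarrow> 'a \<Rightarrow> bool) \<Rightarrow> nat" where
  "chain_length X le = Max (card ` {C. is_chain X le C}) - 1"

definition expect :: "'a set \<Rightarrow> ('a \<Rightarrow> real) \<Rightarrow> ('a \<Rightarrow> real) \<Rightarrow> real" where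
  "expect X \<mu> f = (\<Sum>x\<in>X. f x * \<mu> x)"

definition uni :: "'a set \<Rightarrow> 'a \<Rightarrow> real" where
  "uni X x = 1 / real (card X)"

definition maxchain_dist :: "'a set \<Rightarrow> ('a \<Rightarrow> 'a \<Rightarrow> bool) \<Rightarrow> 'a \<Rightarrow> real" where
  "maxchain_dist X le x =
     real (card {C. is_maxchain X le C \<and> x \<in> C})
     / (\<Sum>y\<in>X. real (card {C. is_maxchain X le C \<and> y \<in> C}))"

definition chain_dist :: "'a set \<Rightarrow> ('a \<Rightarrow> 'a \<Rightarrow> bool) \<Rightarrow> nat \<Rightarrow> 'a \<Rightarrow> real" where
  "chain_dist X le k x =
     real (card {C \<in> kchains X le k. x \<in> C}) / (real (k + 1) * real (card (kchains X le k)))"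

definition ddeg_fun :: "'a set \<Rightarrow> ('a \<Rightarrow> 'a \<Rightarrow> bool) \<Rightarrow> 'a \<Rightarrow> real" where
  "ddeg_fun X le x = real (ddeg X le x)"

definition CDE :: "'a set \<Rightarrow> ('a \<Rightarrow> 'a \<Rightarrow> bool) \<Rightarrow> bool" where
  "CDE X le \<longleftrightarrow> expect X (maxchain_dist X le) (ddeg_fun X le) = expect X (uni X) (ddeg_fun X le)"

definition mCDE :: "'a set \<Rightarrow> ('a \<Rightarrow> 'a \<Rightarrow> bool) \<Rightarrow> bool" where
  "mCDE X le \<longleftrightarrow> (\<forall>k \<le> chain_length X le.
      expect X (chain_dist X le k) (ddeg_fun X le) = expect X (uni X) (ddeg_fun X le))"

definition order_ideals :: "'a set \<Rightarrow> ('a \<Rightarrow> 'a \<Rightarrow> bool) \<Rightarrow> 'a set set" where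
  "order_ideals P le = {I. I \<subseteq> P \<and> (\<forall>x\<in>I. \<forall>y\<in>P. le y x \<longrightarrow> y \<in> I)}"

text \<open>J(P) is order_ideals P le ordered by inclusion\<close>
definition incl :: "'a set \<Rightarrow> 'a set \<Rightarrow> bool" where
  "incl I J \<longleftrightarrow> I \<subseteq> J"

definition toggle_plus :: "'a set \<Rightarrow> ('a \<Rightarrow> 'a \<Rightarrow> bool) \<Rightarrow> 'a \<Rightarrow> 'a set \<Rightarrow> real" where
  "toggle_plus P le p I = (if p \<in> P - I \<and> \<not> (\<exists>q\<in>P - I. strict le q p) then 1 else 0)"

definition toggle_minus :: "'a set \<Rightarrow> ('a \<Rightarrow> 'a \<Rightarrow> bool) \<Rightarrow> 'a \<Rightarrow> 'a set \<Rightarrow> real" where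
  "toggle_minus P le p I = (if p \<in> I \<and> \<not> (\<exists>q\<in>I. strict le p q) then 1 else 0)"

definition is_distribution :: "'b set \<Rightarrow> ('b \<Rightarrow> real) \<Rightarrow> bool" where
  "is_distribution X \<mu> \<longleftrightarrow> (\<forall>x\<in>X. \<mu> x \<ge> 0) \<and> (\<Sum>x\<in>X. \<mu> x) = 1"

definition toggle_symmetric :: "'a set \<Rightarrow> ('a \<Rightarrow> 'a \<Rightarrow> bool) \<Rightarrow> ('a set \<Rightarrow> real) \<Rightarrow> bool" where
  "toggle_symmetric P le \<mu> \<longleftrightarrow> (\<forall>p\<in>P.
      expect (order_ideals P le) \<mu> (toggle_plus P le p)
    = expect (order_ideals P le) \<mu> (toggle_minus P le p))"

text \<open>tCDE P le: the distributive lattice J(P) is tCDE\<close>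
definition tCDE :: "'a set \<Rightarrow> ('a \<Rightarrow> 'a \<Rightarrow> bool) \<Rightarrow> bool" where
  "tCDE P le \<longleftrightarrow> (\<forall>\<mu>. is_distribution (order_ideals P le) \<mu> \<and> toggle_symmetric P le \<mu> \<longrightarrow>
      expect (order_ideals P le) \<mu> (ddeg_fun (order_ideals P le) incl)
    = expect (order_ideals P le) (uni (order_ideals P le)) (ddeg_fun (order_ideals P le) incl))"

end

theory Submission
  imports Defs
begin

text \<open>Reversing the order of \<open>J(P)\<close> exchanges down-degrees and up-degrees and changes neither the
  chains nor the uniform distribution. In \<open>J(P)\<close> the down-degree of \<open>I\<close> counts the \<open>p\<close> with
  \<open>T\<^sup>-\<^sub>p(I) = 1\<close> and the up-degree those with \<open>T\<^sup>+\<^sub>p(I) = 1\<close>, so both degrees have the same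
  expectation under any toggle-symmetric distribution, and under the uniform one by double counting
  of cover relations. The chain distributions are toggle-symmetric: for each \<open>p\<close>, lifting a chain
  along \<open>p\<close> injects the pairs (chain, member to which \<open>p\<close> can be added) into the pairs (chain,
  member from which \<open>p\<close> can be removed), and complementation \<open>I \<mapsto> P - I\<close>, which maps \<open>J(P)\<close>
  onto \<open>J(P\<^sup>*)\<close> reversing inclusion, gives the reverse inequality. For tCDE, complementation
  likewise transports toggle-symmetric distributions on \<open>J(P\<^sup>*)\<close> to \<open>J(P)\<close>.\<close>

subsection \<open>Reversing the order\<close>

lemma dual_rel_dual_rel [simp]: "dual_rel (dual_rel le) = le"
  by (simp add: dual_rel_def fun_eq_iff)

lemma strict_dual_rel: "strict (dual_rel le) x y \<longleftrightarrow> strict le y x"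
  by (auto simp: strict_def dual_rel_def)

lemma covers_dual_rel: "covers X (dual_rel le) y x \<longleftrightarrow> covers X le x y"
  unfolding covers_def strict_dual_rel by blast

lemma is_chain_dual_rel: "is_chain X (dual_rel le) = is_chain X le"
  by (auto simp: is_chain_def dual_rel_def fun_eq_iff)

lemma is_maxchain_dual_rel: "is_maxchain X (dual_rel le) = is_maxchain X le"
  by (simp add: is_maxchain_def is_chain_dual_rel fun_eq_iff)

lemma kchains_dual_rel: "kchains X (dual_rel le) = kchains X le"
  by (simp add: kchains_def is_chain_dual_rel fun_eq_iff)

lemma chain_length_dual_rel: "chain_length X (dual_rel le) = chain_length X le"
  by (simp add: chain_length_def is_chain_dual_rel)

lemma chain_dist_dual_rel: "chain_dist X (dual_rel le) = chain_dist X le"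
  by (simp add: chain_dist_def kchains_dual_rel fun_eq_iff)

lemma maxchain_dist_dual_rel: "maxchain_dist X (dual_rel le) = maxchain_dist X le"
  by (simp add: maxchain_dist_def is_maxchain_dual_rel fun_eq_iff)

lemma is_chain_incl_iff: "is_chain X incl C \<longleftrightarrow> subset.chain X C"
  by (auto simp: is_chain_def incl_def subset_chain_def)

lemma sum_ddeg_dual_rel:
  assumes "finite X"
  shows "(\<Sum>x\<in>X. ddeg X (dual_rel le) x) = (\<Sum>x\<in>X. ddeg X le x)"
proof -
  have card_filter: "card {y\<in>X. Q y} = (\<Sum>y\<in>X. if Q y then 1 else 0)" for Q
    using assms by (simp add: sum.inter_filter[symmetric])
  show ?thesis
    unfolding ddeg_def covers_dual_rel card_filter by (rule sum.swap)
qed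

lemma expect_uni_ddeg_dual_rel:
  assumes "finite X"
  shows "expect X (uni X) (ddeg_fun X (dual_rel le)) = expect X (uni X) (ddeg_fun X le)"
proof -
  have "expect X (uni X) (ddeg_fun X le') = real (\<Sum>x\<in>X. ddeg X le' x) / real (card X)" for le'
    by (simp add: expect_def uni_def ddeg_fun_def sum_divide_distrib)
  then show ?thesis by (simp only: sum_ddeg_dual_rel[OF assms])
qed

subsection \<open>Order ideals, toggles and covers\<close>

lemma finite_poset_has_minimal:
  assumes fp: "finite_poset P le" and "S \<subseteq> P" "S \<noteq> {}"
  obtains x where "x \<in> S" "\<not> (\<exists>y\<in>S. strict le y x)"
proof -
  let ?down = "\<lambda>x. {y\<in>P. le y x}"
  have refl: "\<And>x. x \<in> P \<Longrightarrow> le x x"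
    and antisym: "\<And>x y. x \<in> P \<Longrightarrow> y \<in> P \<Longrightarrow> le x y \<Longrightarrow> le y x \<Longrightarrow> x = y"
    and trans: "\<And>x y z. x \<in> P \<Longrightarrow> y \<in> P \<Longrightarrow> z \<in> P \<Longrightarrow> le x y \<Longrightarrow> le y z \<Longrightarrow> le x z"
    and "finite P"
    using fp unfolding finite_poset_def by blast+
  have "card (?down y) < card (?down x)" if "x \<in> P" "y \<in> P" "strict le y x" for x y
  proof (rule psubset_card_mono)
    show "finite (?down x)" using \<open>finite P\<close> by simp
    have "?down y \<subseteq> ?down x" using that trans unfolding strict_def by blast
    moreover have "x \<in> ?down x - ?down y" using that refl antisym unfolding strict_def by blast
    ultimately show "?down y \<subset> ?down x" by blast
  qed
  moreover obtain x where "x \<in> S" "\<not> (\<exists>y\<in>S. card (?down y) < card (?down x))"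
    using ex_is_arg_min_if_finite[of S "\<lambda>x. card (?down x)"] assms(2,3) \<open>finite P\<close>
    by (auto simp: is_arg_min_def intro: finite_subset)
  ultimately show thesis using that assms(2) by blast
qed

definition addable :: "'a set \<Rightarrow> ('a \<Rightarrow> 'a \<Rightarrow> bool) \<Rightarrow> 'a \<Rightarrow> 'a set \<Rightarrow> bool" where
  "addable P le p I \<longleftrightarrow> p \<in> P - I \<and> \<not> (\<exists>q\<in>P - I. strict le q p)"

definition removable :: "('a \<Rightarrow> 'a \<Rightarrow> bool) \<Rightarrow> 'a \<Rightarrow> 'a set \<Rightarrow> bool" where
  "removable le p I \<longleftrightarrow> p \<in> I \<and> \<not> (\<exists>q\<in>I. strict le p q)"

lemma toggle_plus_eq: "toggle_plus P le p I = of_bool (addable P le p I)"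
  by (simp add: toggle_plus_def addable_def)

lemma toggle_minus_eq: "toggle_minus P le p I = of_bool (removable le p I)"
  by (simp add: toggle_minus_def removable_def)

lemma order_ideals_subset: "I \<in> order_ideals P le \<Longrightarrow> I \<subseteq> P"
  by (simp add: order_ideals_def)

lemma order_idealsD: "I \<in> order_ideals P le \<Longrightarrow> x \<in> I \<Longrightarrow> y \<in> P \<Longrightarrow> le y x \<Longrightarrow> y \<in> I"
  by (simp add: order_ideals_def)

lemma finite_order_ideals: "finite P \<Longrightarrow> finite (order_ideals P le)"
  by (rule finite_subset[of _ "Pow P"]) (auto simp: order_ideals_def)

lemma addable_iff_insert:
  assumes "I \<in> order_ideals P le"
  shows "addable P le p I \<longleftrightarrow> p \<in> P - I \<and> insert p I \<in> order_ideals P le"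
  using assms unfolding addable_def order_ideals_def strict_def by blast

lemma removable_iff_remove:
  assumes "J \<in> order_ideals P le"
  shows "removable le p J \<longleftrightarrow> p \<in> J \<and> J - {p} \<in> order_ideals P le"
  using assms unfolding removable_def order_ideals_def strict_def by blast

lemma addable_mono:
  assumes "addable P le p I" "I \<subseteq> J" "J \<subseteq> P" "p \<notin> J"
  shows "addable P le p J"
  using assms by (auto simp: addable_def)

lemma exists_insert_order_ideal:
  assumes fp: "finite_poset P le"
    and I: "I \<in> order_ideals P le" and J: "J \<in> order_ideals P le" and "I \<subset> J"
  obtains x where "x \<in> J - I" "insert x I \<in> order_ideals P le"
proof -
  obtain x where x: "x \<in> J - I" "\<not> (\<exists>y\<in>J - I. strict le y x)"
    using finite_poset_has_minimal[OF fp, of "J - I"] order_ideals_subset[OF J] \<open>I \<subset> J\<close> by blast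
  have "addable P le x I"
    using x order_idealsD[OF J] order_ideals_subset[OF J] by (auto simp: addable_def strict_def)
  then show thesis using that x addable_iff_insert[OF I] by blast
qed

lemma covers_order_ideals:
  assumes fp: "finite_poset P le"
    and I: "I \<in> order_ideals P le" and J: "J \<in> order_ideals P le"
  shows "covers (order_ideals P le) incl J I \<longleftrightarrow> (\<exists>p\<in>J. I = J - {p})"
proof
  assume cov: "covers (order_ideals P le) incl J I"
  then have "I \<subset> J" by (auto simp: covers_def strict_def incl_def)
  then obtain x where x: "x \<in> J - I" "insert x I \<in> order_ideals P le"
    using exists_insert_order_ideal[OF fp I J] by blast
  then have "insert x I = J"
    using cov \<open>I \<subset> J\<close> unfolding covers_def strict_def incl_def by blast
  then show "\<exists>p\<in>J. I = J - {p}" using x by blast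
qed (use I J in \<open>auto simp: covers_def strict_def incl_def\<close>)

lemma ddeg_order_ideals:
  assumes fp: "finite_poset P le" and I: "I \<in> order_ideals P le"
  shows "ddeg (order_ideals P le) incl I = card {p\<in>P. removable le p I}"
proof -
  have "{J\<in>order_ideals P le. covers (order_ideals P le) incl I J}
      = (\<lambda>p. I - {p}) ` {p\<in>P. removable le p I}"
  proof (intro set_eqI iffI)
    fix J assume "J \<in> {J\<in>order_ideals P le. covers (order_ideals P le) incl I J}"
    then obtain p where "J \<in> order_ideals P le" "p \<in> I" "J = I - {p}"
      using covers_order_ideals[OF fp _ I] by blast
    then show "J \<in> (\<lambda>p. I - {p}) ` {p\<in>P. removable le p I}"
      using removable_iff_remove[OF I, of p] order_ideals_subset[OF I] by blast
  qed (use covers_order_ideals[OF fp _ I] removable_iff_remove[OF I] in force)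
  moreover have "inj_on (\<lambda>p. I - {p}) {p\<in>P. removable le p I}"
    by (rule inj_onI) (auto simp: removable_def)
  ultimately show ?thesis by (simp add: ddeg_def card_image)
qed

lemma ddeg_dual_order_ideals:
  assumes fp: "finite_poset P le" and I: "I \<in> order_ideals P le"
  shows "ddeg (order_ideals P le) (dual_rel incl) I = card {p\<in>P. addable P le p I}"
proof -
  have "{J\<in>order_ideals P le. covers (order_ideals P le) incl J I}
      = (\<lambda>p. insert p I) ` {p\<in>P. addable P le p I}"
  proof (intro set_eqI iffI)
    fix J assume "J \<in> {J\<in>order_ideals P le. covers (order_ideals P le) incl J I}"
    then obtain p where J: "J \<in> order_ideals P le" "p \<in> J" "I = J - {p}"
      using covers_order_ideals[OF fp I] by blast
    have "J = insert p I" using J(2,3) by blast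
    moreover have "p \<in> P - I" using J order_ideals_subset[OF J(1)] by blast
    ultimately have "addable P le p I" using J(1) addable_iff_insert[OF I] by simp
    then show "J \<in> (\<lambda>p. insert p I) ` {p\<in>P. addable P le p I}"
      using \<open>J = insert p I\<close> \<open>p \<in> P - I\<close> by blast
  qed (use covers_order_ideals[OF fp I] addable_iff_insert[OF I] in force)
  moreover have "inj_on (\<lambda>p. insert p I) {p\<in>P. addable P le p I}"
    by (rule inj_onI) (auto simp: addable_def)
  ultimately show ?thesis by (simp add: ddeg_def covers_dual_rel card_image)
qed

lemma expect_ddeg_order_ideals:
  assumes fp: "finite_poset P le"
  shows "expect (order_ideals P le) \<rho> (ddeg_fun (order_ideals P le) incl)
       = (\<Sum>p\<in>P. expect (order_ideals P le) \<rho> (toggle_minus P le p))"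
proof -
  have "finite P" using fp by (simp add: finite_poset_def)
  then have "ddeg_fun (order_ideals P le) incl I = (\<Sum>p\<in>P. toggle_minus P le p I)"
    if "I \<in> order_ideals P le" for I
    using ddeg_order_ideals[OF fp that] by (simp add: ddeg_fun_def toggle_minus_eq Int_def conj_commute)
  then have "expect (order_ideals P le) \<rho> (ddeg_fun (order_ideals P le) incl)
      = (\<Sum>I\<in>order_ideals P le. \<Sum>p\<in>P. toggle_minus P le p I * \<rho> I)"
    unfolding expect_def by (simp add: sum_distrib_right)
  then show ?thesis
    unfolding expect_def by (simp add: sum.swap[of _ P])
qed

lemma expect_ddeg_dual_order_ideals:
  assumes fp: "finite_poset P le"
  shows "expect (order_ideals P le) \<rho> (ddeg_fun (order_ideals P le) (dual_rel incl))
       = (\<Sum>p\<in>P. expect (order_ideals P le) \<rho> (toggle_plus P le p))"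
proof -
  have "finite P" using fp by (simp add: finite_poset_def)
  then have "ddeg_fun (order_ideals P le) (dual_rel incl) I = (\<Sum>p\<in>P. toggle_plus P le p I)"
    if "I \<in> order_ideals P le" for I
    using ddeg_dual_order_ideals[OF fp that] by (simp add: ddeg_fun_def toggle_plus_eq Int_def conj_commute)
  then have "expect (order_ideals P le) \<rho> (ddeg_fun (order_ideals P le) (dual_rel incl))
      = (\<Sum>I\<in>order_ideals P le. \<Sum>p\<in>P. toggle_plus P le p I * \<rho> I)"
    unfolding expect_def by (simp add: sum_distrib_right)
  then show ?thesis
    unfolding expect_def by (simp add: sum.swap[of _ P])
qed

lemma toggle_symmetric_expect_ddeg:
  assumes "finite_poset P le" "toggle_symmetric P le \<rho>"
  shows "expect (order_ideals P le) \<rho> (ddeg_fun (order_ideals P le) (dual_rel incl))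
       = expect (order_ideals P le) \<rho> (ddeg_fun (order_ideals P le) incl)"
  unfolding expect_ddeg_order_ideals[OF assms(1)] expect_ddeg_dual_order_ideals[OF assms(1)]
  using assms(2) by (auto simp: toggle_symmetric_def intro: sum.cong)

lemma toggle_symmetric_divide:
  assumes "toggle_symmetric P le \<rho>"
  shows "toggle_symmetric P le (\<lambda>I. \<rho> I / c)"
proof -
  have "expect X (\<lambda>I. \<rho> I / c) f = expect X \<rho> f / c" for X and f :: "'a set \<Rightarrow> real"
    by (simp add: expect_def sum_divide_distrib)
  then show ?thesis using assms by (simp add: toggle_symmetric_def)
qed

subsection \<open>Lifting a chain along an addable element\<close>

lemma subset_chain_Un:
  assumes "subset.chain A B" "subset.chain A B'" "\<And>X Y. X \<in> B \<Longrightarrow> Y \<in> B' \<Longrightarrow> X \<subseteq> Y \<or> Y \<subseteq> X"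
  shows "subset.chain A (B \<union> B')"
  using assms unfolding subset_chain_def by (simp add: Ball_def) meson

text \<open>Lifting a chain at an ideal \<open>I\<close> to which \<open>p\<close> can be added: the run of \<open>C\<close> from \<open>I\<close> up
  to the point where \<open>p\<close> enters is shifted up by adding \<open>p\<close>, and its new top is marked. If that
  top already lies in \<open>C\<close>, the ideal \<open>I\<close> is kept, so that the size of the chain is preserved.
  Dropping is the inverse operation, read off from the marked top.\<close>

definition lift_segment :: "'a set set \<Rightarrow> 'a \<Rightarrow> 'a set \<Rightarrow> 'a set set" where
  "lift_segment C p I = {J\<in>C. I \<subseteq> J \<and> p \<notin> J}"

definition lift_top :: "'a set set \<Rightarrow> 'a \<Rightarrow> 'a set \<Rightarrow> 'a set" where
  "lift_top C p I = insert p (\<Union>(lift_segment C p I))"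

definition lift_chain :: "'a set set \<Rightarrow> 'a \<Rightarrow> 'a set \<Rightarrow> 'a set set" where
  "lift_chain C p I = (C - lift_segment C p I - {lift_top C p I}) \<union> insert p ` lift_segment C p I
     \<union> (if lift_top C p I \<in> C then {I} else {})"

definition drop_segment :: "'a set set \<Rightarrow> 'a \<Rightarrow> 'a set \<Rightarrow> 'a set set" where
  "drop_segment C p J = {K\<in>C. p \<in> K \<and> K \<subseteq> J}"

definition drop_bottom :: "'a set set \<Rightarrow> 'a \<Rightarrow> 'a set \<Rightarrow> 'a set" where
  "drop_bottom C p J = \<Inter>(drop_segment C p J) - {p}"

definition drop_chain :: "'a set set \<Rightarrow> 'a \<Rightarrow> 'a set \<Rightarrow> 'a set set" where
  "drop_chain C p J = (C - drop_segment C p J - {drop_bottom C p J}) \<union> (\<lambda>K. K - {p}) ` drop_segment C p J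
     \<union> (if drop_bottom C p J \<in> C then {J} else {})"

context
  fixes P :: "'a set" and le :: "'a \<Rightarrow> 'a \<Rightarrow> bool" and p :: 'a
    and C :: "'a set set" and I :: "'a set" and k :: nat
  assumes C_kchain: "C \<in> kchains (order_ideals P le) incl k"
    and I_in_C: "I \<in> C" and addable_I: "addable P le p I"
begin

abbreviation "U \<equiv> lift_segment C p I"
abbreviation "T \<equiv> lift_top C p I"
abbreviation "L \<equiv> C - U - {T}"

private lemma C_subset: "C \<subseteq> order_ideals P le"
  and C_chain: "subset.chain (order_ideals P le) C"
  and finite_C: "finite C"
  using C_kchain by (auto simp: kchains_def is_chain_incl_iff subset_chain_def intro: card_ge_0_finite)

private lemma lift_segmentD: "J \<in> U \<Longrightarrow> J \<in> C \<and> I \<subseteq> J \<and> p \<notin> J"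
  by (simp add: lift_segment_def)

private lemma I_in_lift_segment: "I \<in> U"
  using I_in_C addable_I by (simp add: lift_segment_def addable_def)

private lemma Union_lift_segment_mem: "\<Union>U \<in> U"
proof (rule Union_in_chain)
  show "finite U" using finite_C by (simp add: lift_segment_def)
  show "U \<noteq> {}" using I_in_lift_segment by blast
  show "subset.chain (order_ideals P le) U"
    using C_chain by (auto simp: subset_chain_def lift_segment_def)
qed

private lemma insert_lift_segment_ideal: "J \<in> U \<Longrightarrow> insert p J \<in> order_ideals P le"
proof -
  assume J: "J \<in> U"
  then have J_ideal: "J \<in> order_ideals P le" using C_subset lift_segmentD by blast
  have "addable P le p J"
    using addable_mono[OF addable_I] lift_segmentD[OF J] order_ideals_subset[OF J_ideal] by blast
  then show ?thesis using addable_iff_insert[OF J_ideal] by blast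
qed

lemma removable_lift_top: "removable le p T"
proof -
  have "\<Union>U \<in> order_ideals P le" using Union_lift_segment_mem C_subset lift_segmentD by blast
  moreover have "T - {p} = \<Union>U" using Union_lift_segment_mem lift_segmentD by (auto simp: lift_top_def)
  ultimately show ?thesis
    using insert_lift_segment_ideal[OF Union_lift_segment_mem]
    by (simp add: removable_iff_remove lift_top_def)
qed

private lemma chain_lift_segment_cases:
  assumes "K \<in> C" "K \<notin> U"
  shows "K \<subset> I \<and> p \<notin> K \<or> T \<subseteq> K"
proof (cases "p \<in> K")
  case True
  have "\<Union>U \<in> C" using Union_lift_segment_mem lift_segmentD by blast
  then have "K \<subseteq> \<Union>U \<or> \<Union>U \<subseteq> K" using C_chain assms(1) by (auto simp: subset_chain_def)
  then show ?thesis using True Union_lift_segment_mem lift_segmentD by (auto simp: lift_top_def)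
next
  case False
  then have "K \<subseteq> I \<or> I \<subseteq> K" using C_chain assms(1) I_in_C by (auto simp: subset_chain_def)
  then show ?thesis using False assms I_in_lift_segment by (auto simp: lift_segment_def)
qed

private lemma lift_segment_below_top: "J \<in> U \<Longrightarrow> I \<subseteq> insert p J \<and> insert p J \<subseteq> T"
  using lift_segmentD by (auto simp: lift_top_def)

private lemma insert_lift_segment_disjoint: "L \<inter> insert p ` U = {}"
  using chain_lift_segment_cases lift_segment_below_top by blast

private lemma I_notin_rest_lifted: "I \<notin> L" "I \<notin> insert p ` U"
  using I_in_lift_segment addable_I by (auto simp: addable_def)

private lemma chain_split: "C = L \<union> U \<union> (if T \<in> C then {T} else {})"
  using I_in_lift_segment lift_segmentD by auto

private lemma card_chain_split: "card C = card L + card U + (if T \<in> C then 1 else 0)"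
proof -
  have "T \<notin> L \<union> U" using lift_segmentD by (auto simp: lift_top_def)
  moreover have "finite L" "finite U" "L \<inter> U = {}" using finite_C by (auto simp: lift_segment_def)
  moreover have "card C = card (L \<union> U \<union> (if T \<in> C then {T} else {}))"
    using chain_split by (rule arg_cong)
  ultimately show ?thesis by (simp add: card_Un_disjoint)
qed

private lemma chain_insert_lift_segment: "subset.chain (order_ideals P le) (insert p ` U)"
proof -
  have "insert p J \<subseteq> insert p J' \<or> insert p J' \<subseteq> insert p J" if "J \<in> U" "J' \<in> U" for J J'
    using C_chain lift_segmentD[OF that(1)] lift_segmentD[OF that(2)]
    unfolding subset_chain_def by blast
  then show ?thesis using insert_lift_segment_ideal unfolding subset_chain_def by blast
qed

lemma lift_chain_kchain: "lift_chain C p I \<in> kchains (order_ideals P le) incl k"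
proof -
  let ?M = "insert p ` U \<union> (if T \<in> C then {I} else {})"
  have M_chain: "subset.chain (order_ideals P le) ?M"
  proof (cases "T \<in> C")
    case True
    then have "?M = insert I (insert p ` U)" by simp
    then show ?thesis
      using chain_insert_lift_segment I_in_C C_subset lift_segment_below_top
      by (auto simp: subset_chain_insert)
  qed (simp add: chain_insert_lift_segment)
  have "K \<subseteq> K' \<or> K' \<subseteq> K" if "K \<in> L" "K' \<in> ?M" for K K'
  proof -
    have "I \<subseteq> K' \<and> K' \<subseteq> T"
      using that(2) lift_segment_below_top I_in_lift_segment by (auto split: if_splits)
    then show ?thesis using chain_lift_segment_cases[of K] that(1) by blast
  qed
  moreover have "subset.chain (order_ideals P le) L" using C_chain by (auto simp: subset_chain_def)
  ultimately have "subset.chain (order_ideals P le) (L \<union> ?M)"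
    using M_chain by (rule subset_chain_Un[rotated 2])
  then have chain: "subset.chain (order_ideals P le) (lift_chain C p I)"
    by (simp add: lift_chain_def Un_assoc)
  have "inj_on (insert p) U" by (rule inj_onI) (metis lift_segmentD insert_ident)
  then have "card (insert p ` U) = card U" by (rule card_image)
  moreover have "finite L" "finite (insert p ` U)" using finite_C by (auto simp: lift_segment_def)
  ultimately have "card (lift_chain C p I) = card L + card U + (if T \<in> C then 1 else 0)"
    using insert_lift_segment_disjoint I_notin_rest_lifted by (simp add: lift_chain_def card_Un_disjoint)
  then show ?thesis
    using chain C_kchain card_chain_split by (simp add: kchains_def is_chain_incl_iff)
qed

lemma drop_lift_chain:
  "drop_chain (lift_chain C p I) p T = C \<and> drop_bottom (lift_chain C p I) p T = I"
proof -
  have segment: "drop_segment (lift_chain C p I) p T = insert p ` U"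
    using chain_lift_segment_cases lift_segment_below_top I_notin_rest_lifted addable_I
    by (auto simp: drop_segment_def lift_chain_def addable_def)
  have "\<Inter>(insert p ` U) = insert p I"
    using I_in_lift_segment lift_segmentD by blast
  then have bottom: "drop_bottom (lift_chain C p I) p T = I"
    using addable_I by (auto simp: drop_bottom_def segment addable_def)
  have "(\<lambda>K. K - {p}) ` insert p ` U = (\<lambda>J. J) ` U"
    unfolding image_image by (rule image_cong) (use lift_segmentD in auto)
  also have "\<dots> = U" by simp
  finally have dropped: "(\<lambda>K. K - {p}) ` insert p ` U = U" .
  have "L \<union> insert p ` U \<union> B - insert p ` U - {I} = L" if "B \<subseteq> {I}" for B
    using that insert_lift_segment_disjoint I_notin_rest_lifted(1) by blast
  then have rest: "lift_chain C p I - insert p ` U - {I} = L"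
    unfolding lift_chain_def by simp
  have kept: "I \<in> lift_chain C p I \<longleftrightarrow> T \<in> C"
    using I_notin_rest_lifted unfolding lift_chain_def by simp
  have "drop_chain (lift_chain C p I) p T = L \<union> U \<union> (if T \<in> C then {T} else {})"
    unfolding drop_chain_def segment bottom dropped rest kept ..
  then show ?thesis using chain_split bottom by simp
qed

lemma lift_top_in_lift_chain: "T \<in> lift_chain C p I"
  using Union_lift_segment_mem by (auto simp: lift_chain_def lift_top_def)

end

subsection \<open>Complementation\<close>

lemma compl_order_ideal: "I \<in> order_ideals P le \<Longrightarrow> P - I \<in> order_ideals P (dual_rel le)"
  unfolding order_ideals_def dual_rel_def by blast

lemma bij_betw_compl_order_ideals:
  "bij_betw (\<lambda>I. P - I) (order_ideals P le) (order_ideals P (dual_rel le))"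
proof (rule bij_betw_byWitness[where f' = "\<lambda>I. P - I"])
  show "\<forall>I\<in>order_ideals P le. P - (P - I) = I"
    and "\<forall>I\<in>order_ideals P (dual_rel le). P - (P - I) = I"
    by (auto dest: order_ideals_subset)
  show "(\<lambda>I. P - I) ` order_ideals P le \<subseteq> order_ideals P (dual_rel le)"
    and "(\<lambda>I. P - I) ` order_ideals P (dual_rel le) \<subseteq> order_ideals P le"
    using compl_order_ideal[of _ P le] compl_order_ideal[of _ P "dual_rel le"] by auto
qed

lemma addable_dual_rel_compl:
  "I \<subseteq> P \<Longrightarrow> addable P (dual_rel le) p (P - I) \<longleftrightarrow> removable le p I"
  unfolding addable_def removable_def strict_dual_rel by blast

lemma removable_dual_rel_compl: "removable (dual_rel le) p (P - I) \<longleftrightarrow> addable P le p I"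
  unfolding addable_def removable_def strict_dual_rel by blast

lemma compl_kchain:
  assumes "C \<in> kchains (order_ideals P le) incl k"
  shows "(\<lambda>J. P - J) ` C \<in> kchains (order_ideals P (dual_rel le)) incl k"
proof -
  have C: "C \<subseteq> order_ideals P le" "subset.chain (order_ideals P le) C" "card C = k + 1"
    using assms by (auto simp: kchains_def is_chain_incl_iff subset_chain_def)
  have "inj_on (\<lambda>J. P - J) C"
    using bij_betw_compl_order_ideals[of P le] C(1) by (auto dest: bij_betw_imp_inj_on inj_on_subset)
  moreover have "subset.chain (order_ideals P (dual_rel le)) ((\<lambda>J. P - J) ` C)"
    using C(2) compl_order_ideal[of _ P le] unfolding subset_chain_def by blast
  ultimately show ?thesis
    using C(3) by (simp add: kchains_def is_chain_incl_iff card_image)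
qed

subsection \<open>Chain counts are toggle-symmetric\<close>

definition addable_pairs :: "'a set \<Rightarrow> ('a \<Rightarrow> 'a \<Rightarrow> bool) \<Rightarrow> nat \<Rightarrow> 'a \<Rightarrow> ('a set set \<times> 'a set) set" where
  "addable_pairs P le k p = {(C, I). C \<in> kchains (order_ideals P le) incl k \<and> I \<in> C \<and> addable P le p I}"

definition removable_pairs :: "'a set \<Rightarrow> ('a \<Rightarrow> 'a \<Rightarrow> bool) \<Rightarrow> nat \<Rightarrow> 'a \<Rightarrow> ('a set set \<times> 'a set) set" where
  "removable_pairs P le k p = {(C, I). C \<in> kchains (order_ideals P le) incl k \<and> I \<in> C \<and> removable le p I}"

lemma kchains_subset: "C \<in> kchains X incl k \<Longrightarrow> C \<subseteq> X"
  by (simp add: kchains_def is_chain_def)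

lemma finite_kchains: "finite X \<Longrightarrow> finite (kchains X incl k)"
  by (rule finite_subset[of _ "Pow X"]) (auto dest: kchains_subset)

lemma finite_chain_pairs:
  "finite P \<Longrightarrow> finite {(C, I). C \<in> kchains (order_ideals P le) incl k \<and> I \<in> C \<and> Q I}"
  by (rule finite_subset[of _ "kchains (order_ideals P le) incl k \<times> order_ideals P le"])
    (auto dest: kchains_subset simp: finite_kchains finite_order_ideals)

lemma card_addable_pairs_le:
  assumes "finite P"
  shows "card (addable_pairs P le k p) \<le> card (removable_pairs P le k p)"
proof (rule card_inj_on_le)
  let ?lift = "\<lambda>(C, I). (lift_chain C p I, lift_top C p I)"
  show "inj_on ?lift (addable_pairs P le k p)"
    by (rule inj_on_inverseI[where g = "\<lambda>(C, J). (drop_chain C p J, drop_bottom C p J)"])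
      (auto simp: addable_pairs_def drop_lift_chain)
  show "?lift ` addable_pairs P le k p \<subseteq> removable_pairs P le k p"
    by (auto simp: addable_pairs_def removable_pairs_def
        lift_chain_kchain lift_top_in_lift_chain removable_lift_top)
  show "finite (removable_pairs P le k p)"
    using assms unfolding removable_pairs_def by (rule finite_chain_pairs)
qed

lemma card_removable_pairs_le:
  assumes "finite P"
  shows "card (removable_pairs P le k p) \<le> card (addable_pairs P (dual_rel le) k p)"
proof (rule card_inj_on_le)
  let ?compl = "\<lambda>(C, I). ((\<lambda>J. P - J) ` C, P - I)"
  have compl_compl: "?compl (?compl (C, I)) = (C, I)"
    if "(C, I) \<in> removable_pairs P le k p" for C I
  proof -
    have "C \<subseteq> Pow P" "I \<subseteq> P"
      using that kchains_subset order_ideals_subset by (fastforce simp: removable_pairs_def)+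
    moreover have "(\<lambda>J. P - J) ` (\<lambda>J. P - J) ` C = (\<lambda>J. J) ` C"
      unfolding image_image by (rule image_cong) (use \<open>C \<subseteq> Pow P\<close> in auto)
    ultimately show ?thesis by auto
  qed
  show "inj_on ?compl (removable_pairs P le k p)"
  proof (rule inj_on_inverseI)
    fix x assume "x \<in> removable_pairs P le k p"
    then show "?compl (?compl x) = x" using compl_compl by (cases x) simp
  qed
  show "?compl ` removable_pairs P le k p \<subseteq> addable_pairs P (dual_rel le) k p"
  proof clarify
    fix C I assume "(C, I) \<in> removable_pairs P le k p"
    then have "C \<in> kchains (order_ideals P le) incl k" "I \<in> C" "removable le p I" "I \<subseteq> P"
      using kchains_subset order_ideals_subset by (fastforce simp: removable_pairs_def)+
    then show "((\<lambda>J. P - J) ` C, P - I) \<in> addable_pairs P (dual_rel le) k p"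
      by (auto simp: addable_pairs_def compl_kchain addable_dual_rel_compl)
  qed
  show "finite (addable_pairs P (dual_rel le) k p)"
    using assms unfolding addable_pairs_def by (rule finite_chain_pairs)
qed

lemma card_addable_pairs_eq:
  assumes "finite P"
  shows "card (addable_pairs P le k p) = card (removable_pairs P le k p)"
  using card_addable_pairs_le[OF assms, of le k p] card_removable_pairs_le[OF assms, of le k p]
    card_addable_pairs_le[OF assms, of "dual_rel le" k p]
    card_removable_pairs_le[OF assms, of "dual_rel le" k p]
  by simp

lemma sum_card_chains_containing:
  assumes "finite P"
  shows "(\<Sum>I\<in>order_ideals P le. of_bool (Q I) * real (card {C \<in> kchains (order_ideals P le) incl k. I \<in> C}))
       = real (card {(C, I). C \<in> kchains (order_ideals P le) incl k \<and> I \<in> C \<and> Q I})"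
proof -
  let ?X = "order_ideals P le" and ?K = "kchains (order_ideals P le) incl k"
  have fin: "finite ?X" "finite ?K" using assms by (simp_all add: finite_order_ideals finite_kchains)
  have "{(C, I). C \<in> ?K \<and> I \<in> C \<and> Q I} = (SIGMA C:?K. {I\<in>?X. I \<in> C \<and> Q I})"
    by (auto dest: kchains_subset)
  then have "real (card {(C, I). C \<in> ?K \<and> I \<in> C \<and> Q I})
      = (\<Sum>C\<in>?K. \<Sum>I\<in>?X. of_bool (I \<in> C \<and> Q I))"
    using fin by (simp add: Int_def)
  also have "\<dots> = (\<Sum>I\<in>?X. of_bool (Q I) * (\<Sum>C\<in>?K. of_bool (I \<in> C)))"
    by (subst sum.swap) (simp add: sum_distrib_left of_bool_conj mult.commute)
  also have "\<dots> = (\<Sum>I\<in>?X. of_bool (Q I) * real (card {C \<in> ?K. I \<in> C}))"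
    using fin by (simp add: Int_def)
  finally show ?thesis by simp
qed

lemma toggle_symmetric_chain_count:
  assumes "finite_poset P le"
  shows "toggle_symmetric P le (\<lambda>I. real (card {C \<in> kchains (order_ideals P le) incl k. I \<in> C}))"
proof -
  have "finite P" using assms by (simp add: finite_poset_def)
  then show ?thesis
    unfolding toggle_symmetric_def expect_def toggle_plus_eq toggle_minus_eq
    by (simp only: sum_card_chains_containing flip: addable_pairs_def removable_pairs_def)
      (simp add: card_addable_pairs_eq)
qed

subsection \<open>Maximal chains of order ideals\<close>

lemma maxchain_memI:
  assumes "is_maxchain X incl C" "Z \<in> X" "\<And>K. K \<in> C \<Longrightarrow> K \<subseteq> Z \<or> Z \<subseteq> K"
  shows "Z \<in> C"
proof -
  have "is_chain X incl (insert Z C)"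
    using assms unfolding is_maxchain_def is_chain_def incl_def by blast
  then show ?thesis using assms(1) unfolding is_maxchain_def by blast
qed

lemma card_chain_order_ideals_le:
  assumes "finite P" "is_chain (order_ideals P le) incl D"
  shows "card D \<le> card P + 1"
proof -
  have D: "D \<subseteq> Pow P" "subset.chain (order_ideals P le) D"
    using assms(2) order_ideals_subset by (auto simp: is_chain_incl_iff subset_chain_def)
  have "inj_on card D"
  proof (rule inj_onI)
    fix A B assume "A \<in> D" "B \<in> D" "card A = card B"
    moreover have "finite A" "finite B"
      using \<open>A \<in> D\<close> \<open>B \<in> D\<close> D(1) assms(1) by (auto intro: finite_subset)
    ultimately show "A = B"
      using D(2) unfolding subset_chain_def by (metis card_subset_eq)
  qed
  moreover have "card ` D \<subseteq> {0..card P}" using D(1) assms(1) by (auto simp: card_mono)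
  ultimately show ?thesis
    using card_mono[of "{0..card P}" "card ` D"] by (simp add: card_image)
qed

text \<open>A maximal chain passes through every rank, since an ideal lying strictly between two
  consecutive members of the chain could be added to it.\<close>

lemma card_maxchain_order_ideals:
  assumes fp: "finite_poset P le" and C: "is_maxchain (order_ideals P le) incl C"
  shows "card C = card P + 1"
proof -
  let ?X = "order_ideals P le"
  have fin: "finite P" using fp by (simp add: finite_poset_def)
  have chain: "subset.chain ?X C" and C_sub: "C \<subseteq> ?X"
    using C by (auto simp: is_maxchain_def is_chain_incl_iff subset_chain_def)
  have finite_C: "finite C"
    using C_sub fin finite_order_ideals finite_subset by blast
  have P_in_C: "P \<in> C"
    by (rule maxchain_memI[OF C]) (use C_sub in \<open>auto simp: order_ideals_def\<close>)
  have "s \<in> card ` C" if "s \<le> card P" for s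
    using that
  proof (induction s)
    case 0
    have "{} \<in> C" by (rule maxchain_memI[OF C]) (auto simp: order_ideals_def)
    then show ?case by force
  next
    case (Suc s)
    then obtain I where I: "I \<in> C" "card I = s" by auto
    let ?H = "{K\<in>C. I \<subset> K}"
    have "I \<subseteq> P" using I C_sub order_ideals_subset by blast
    then have "P \<in> ?H" using I Suc.prems P_in_C by auto
    then have "\<Inter>?H \<in> ?H"
      using finite_C chain by (intro Inter_in_chain) (auto simp: subset_chain_def)
    then have "\<Inter>?H \<in> ?X" "I \<subset> \<Inter>?H" using C_sub by auto
    moreover have "I \<in> ?X" using I C_sub by blast
    ultimately obtain x where x: "x \<in> \<Inter>?H - I" "insert x I \<in> ?X"
      using exists_insert_order_ideal[OF fp] by metis
    have "K \<subseteq> insert x I \<or> insert x I \<subseteq> K" if "K \<in> C" for K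
    proof (cases "I \<subset> K")
      case True
      then show ?thesis using x that by blast
    next
      case False
      then show ?thesis using chain I(1) that unfolding subset_chain_def by blast
    qed
    then have "insert x I \<in> C" by (rule maxchain_memI[OF C x(2)])
    moreover have "card (insert x I) = Suc s"
      using I x \<open>I \<subseteq> P\<close> fin by (simp add: finite_subset)
    ultimately show ?case by force
  qed
  then have "{0..card P} \<subseteq> card ` C" by auto
  then have "card {0..card P} \<le> card (card ` C)"
    by (rule card_mono[OF finite_imageI[OF finite_C]])
  then have "card P + 1 \<le> card C"
    using card_image_le[OF finite_C, of card] by simp
  moreover have "card C \<le> card P + 1"
    using C unfolding is_maxchain_def by (blast intro: card_chain_order_ideals_le[OF fin])
  ultimately show ?thesis by simp
qed

lemma is_maxchain_order_ideals_iff: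
  assumes fp: "finite_poset P le"
  shows "is_maxchain (order_ideals P le) incl C \<longleftrightarrow> C \<in> kchains (order_ideals P le) incl (card P)"
proof
  assume "is_maxchain (order_ideals P le) incl C"
  then show "C \<in> kchains (order_ideals P le) incl (card P)"
    using card_maxchain_order_ideals[OF fp] by (simp add: kchains_def is_maxchain_def)
next
  have fin: "finite P" using fp by (simp add: finite_poset_def)
  assume C: "C \<in> kchains (order_ideals P le) incl (card P)"
  have "D = C" if "is_chain (order_ideals P le) incl D" "C \<subseteq> D" for D
  proof -
    have "finite D"
      using that(1) finite_order_ideals[OF fin] by (auto simp: is_chain_def intro: finite_subset)
    moreover have "card C = card P + 1" using C by (simp add: kchains_def)
    ultimately have "card D \<le> card C"
      using card_chain_order_ideals_le[OF fin that(1)] by simp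
    with \<open>finite D\<close> that(2) show ?thesis by (metis card_seteq)
  qed
  then show "is_maxchain (order_ideals P le) incl C"
    using C by (auto simp: is_maxchain_def kchains_def)
qed

subsection \<open>CDE and mCDE\<close>

lemma toggle_symmetric_chain_dist:
  "finite_poset P le \<Longrightarrow> toggle_symmetric P le (chain_dist (order_ideals P le) incl k)"
  unfolding chain_dist_def by (rule toggle_symmetric_divide[OF toggle_symmetric_chain_count])

lemma toggle_symmetric_maxchain_dist:
  assumes "finite_poset P le"
  shows "toggle_symmetric P le (maxchain_dist (order_ideals P le) incl)"
proof -
  have "{C. is_maxchain (order_ideals P le) incl C \<and> I \<in> C}
      = {C \<in> kchains (order_ideals P le) incl (card P). I \<in> C}" for I
    using is_maxchain_order_ideals_iff[OF assms] by blast
  then show ?thesis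
    unfolding maxchain_dist_def
    by (simp only:) (rule toggle_symmetric_divide[OF toggle_symmetric_chain_count[OF assms]])
qed

lemma CDE_dual_order_ideals:
  assumes "finite_poset P le" "CDE (order_ideals P le) incl"
  shows "CDE (order_ideals P le) (dual_rel incl)"
proof -
  have "finite (order_ideals P le)"
    using assms(1) by (simp add: finite_poset_def finite_order_ideals)
  then show ?thesis
    using assms unfolding CDE_def maxchain_dist_dual_rel
    by (simp add: toggle_symmetric_expect_ddeg toggle_symmetric_maxchain_dist expect_uni_ddeg_dual_rel)
qed

lemma mCDE_dual_order_ideals:
  assumes "finite_poset P le" "mCDE (order_ideals P le) incl"
  shows "mCDE (order_ideals P le) (dual_rel incl)"
proof -
  have "finite (order_ideals P le)"
    using assms(1) by (simp add: finite_poset_def finite_order_ideals)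
  then show ?thesis
    using assms unfolding mCDE_def chain_dist_dual_rel chain_length_dual_rel
    by (simp add: toggle_symmetric_expect_ddeg toggle_symmetric_chain_dist expect_uni_ddeg_dual_rel)
qed

subsection \<open>tCDE\<close>

lemma finite_poset_dual_rel: "finite_poset P le \<Longrightarrow> finite_poset P (dual_rel le)"
  unfolding finite_poset_def dual_rel_def by blast

lemma expect_cong: "(\<And>x. x \<in> X \<Longrightarrow> f x = g x) \<Longrightarrow> expect X \<mu> f = expect X \<mu> g"
  by (simp add: expect_def)

lemma expect_compl_order_ideals:
  "expect (order_ideals P (dual_rel le)) \<mu> f
     = expect (order_ideals P le) (\<lambda>I. \<mu> (P - I)) (\<lambda>I. f (P - I))"
  unfolding expect_def by (rule sum.reindex_bij_betw[OF bij_betw_compl_order_ideals, symmetric])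

lemma toggle_symmetric_compl:
  assumes "toggle_symmetric P (dual_rel le) \<mu>"
  shows "toggle_symmetric P le (\<lambda>I. \<mu> (P - I))"
  unfolding toggle_symmetric_def
proof
  fix p assume "p \<in> P"
  let ?X = "order_ideals P le" and ?Y = "order_ideals P (dual_rel le)"
  have "expect ?X (\<lambda>I. \<mu> (P - I)) (toggle_plus P le p)
      = expect ?Y \<mu> (toggle_minus P (dual_rel le) p)"
    unfolding expect_compl_order_ideals
    by (rule expect_cong) (simp add: toggle_plus_eq toggle_minus_eq removable_dual_rel_compl)
  also have "\<dots> = expect ?Y \<mu> (toggle_plus P (dual_rel le) p)"
    using assms \<open>p \<in> P\<close> by (simp add: toggle_symmetric_def)
  also have "\<dots> = expect ?X (\<lambda>I. \<mu> (P - I)) (toggle_minus P le p)"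
    unfolding expect_compl_order_ideals
    by (rule expect_cong)
      (simp add: toggle_plus_eq toggle_minus_eq addable_dual_rel_compl order_ideals_subset)
  finally show "expect ?X (\<lambda>I. \<mu> (P - I)) (toggle_plus P le p)
      = expect ?X (\<lambda>I. \<mu> (P - I)) (toggle_minus P le p)" .
qed

lemma is_distribution_compl:
  assumes "is_distribution (order_ideals P (dual_rel le)) \<mu>"
  shows "is_distribution (order_ideals P le) (\<lambda>I. \<mu> (P - I))"
  using assms compl_order_ideal[of _ P le]
    sum.reindex_bij_betw[OF bij_betw_compl_order_ideals[of P le], of \<mu>]
  by (simp add: is_distribution_def)

lemma ddeg_compl_order_ideals:
  assumes "finite_poset P le" "I \<in> order_ideals P le"
  shows "ddeg (order_ideals P (dual_rel le)) incl (P - I) = ddeg (order_ideals P le) (dual_rel incl) I"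
  using ddeg_order_ideals[OF finite_poset_dual_rel[OF assms(1)] compl_order_ideal[OF assms(2)]]
    ddeg_dual_order_ideals[OF assms]
  by (simp add: removable_dual_rel_compl)

lemma tCDE_dual_rel:
  assumes fp: "finite_poset P le" and tCDE: "tCDE P le"
  shows "tCDE P (dual_rel le)"
  unfolding tCDE_def
proof (intro allI impI, elim conjE)
  let ?X = "order_ideals P le" and ?Y = "order_ideals P (dual_rel le)"
  fix \<mu> assume dist: "is_distribution ?Y \<mu>" and sym: "toggle_symmetric P (dual_rel le) \<mu>"
  have finite_X: "finite ?X" using fp by (simp add: finite_poset_def finite_order_ideals)
  have uni: "(\<lambda>I. uni ?Y (P - I)) = uni ?X"
    using bij_betw_same_card[OF bij_betw_compl_order_ideals[of P le]] by (simp add: uni_def fun_eq_iff)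
  have "expect ?Y \<mu> (ddeg_fun ?Y incl) = expect ?X (\<lambda>I. \<mu> (P - I)) (ddeg_fun ?X (dual_rel incl))"
    unfolding expect_compl_order_ideals
    by (rule expect_cong) (simp add: ddeg_fun_def ddeg_compl_order_ideals[OF fp])
  also have "\<dots> = expect ?X (\<lambda>I. \<mu> (P - I)) (ddeg_fun ?X incl)"
    using toggle_symmetric_expect_ddeg[OF fp toggle_symmetric_compl[OF sym]] .
  also have "\<dots> = expect ?X (uni ?X) (ddeg_fun ?X incl)"
    using tCDE is_distribution_compl[OF dist] toggle_symmetric_compl[OF sym] by (simp add: tCDE_def)
  also have "\<dots> = expect ?X (uni ?X) (ddeg_fun ?X (dual_rel incl))"
    using expect_uni_ddeg_dual_rel[OF finite_X] by simp
  also have "\<dots> = expect ?Y (uni ?Y) (ddeg_fun ?Y incl)"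
    unfolding expect_compl_order_ideals uni
    by (rule expect_cong) (simp add: ddeg_fun_def ddeg_compl_order_ideals[OF fp])
  finally show "expect ?Y \<mu> (ddeg_fun ?Y incl) = expect ?Y (uni ?Y) (ddeg_fun ?Y incl)" .
qed

theorem proposition3p5:
  fixes P :: "'a set" and le :: "'a \<Rightarrow> 'a \<Rightarrow> bool"
  assumes "finite_poset P le"
  shows "(CDE (order_ideals P le) incl \<longrightarrow> CDE (order_ideals P le) (dual_rel incl))
       \<and> (mCDE (order_ideals P le) incl \<longrightarrow> mCDE (order_ideals P le) (dual_rel incl))
       \<and> (tCDE P le \<longrightarrow> tCDE P (dual_rel le))"
  using CDE_dual_order_ideals[OF assms] mCDE_dual_order_ideals[OF assms] tCDE_dual_rel[OF assms]
  by blast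

end
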